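(* Let $\mathcal{D} = \{(1,2),(3,2),(3,4),(5,4),(5,1)\}$ and $\epsilon\ge 0$. Let $\mu$ be a probability measure on a measurable space $\Lambda$ of hidden variables. Suppose that for each $h\in\Lambda$ we are given numbers $p_i(h)\in[0,1]$ for $i\in\{1,\dots,5\}$ and $q_{(i,j)}(h)\in[0,1]$ for $(i,j)\in\mathcal{D}$, measurable in $h$, with the following interpretation: $p_i(h)=\Pr(A_i=1\mid \#1=i,h)$ is the probability that measurement $i$, when performed first, yields outcome $+1$, and $q_{(i,j)}(h)=\Pr(A_j=1\mid \#1=i,\#2=j,h)$ is the probability that measurement $j$, performed second after $i$, yields $+1$ (outcomes are $\pm1$). Assume sequentiality: for each $h$ and $(i,j)\in\mathcal{D}$, $\Pr(A_i=a_i,A_j=a_j\mid \#1=i,\#2=j,h)=\Pr(A_i=a_i\mid\#1=i,h)\Pr(A_j=a_j\mid\#1=i,\#2=j,h)$. Assume bounded incompatibility: there are measurable $\epsilon_{(i,j),h}\in[0,1]$ with $|\Pr(A_j=a\mid \#1=j,h)-\Pr(A_j=a\mid\#1=i,\#2=j,h)|\le \epsilon_{(i,j),h}$ for all $h$, $(i,j)\in\mathcal{D}$, $a\in\{\pm1\}$, and $\frac15\int \mathrm{d}\mu(h)\sum_{(i,j)\in\mathcal{D}}\epsilon_{(i,j),h}\le\epsilon$. Consider the game in which an ordered context $(i,j)\in\mathcal{D}$ is selected uniformly at random (probability $1/5$ each, independently of $h$), $i$ is measured first and $j$ second, and the game is won iff the two outcomes differ. Then the winning probability $$\beta_{\mathrm{win}}=\frac15\int\mathrm{d}\mu(h)\sum_{(i,j)\in\mathcal{D}}\sum_{a\in\{-1,1\}}\Pr(A_i=a,A_j=-a\mid\#1=i,\#2=j,h)$$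 satisfies $\beta_{\mathrm{win}}\le \frac45+\epsilon$.
   Context: This is the single-trial winning probability of an $\epsilon$-bounded noncontextual hidden variable model in the KCBS win/lose game (five $\pm1$-valued measurements arranged in a pentagon, ordered contexts in $\mathcal{D}$). $\Pr(A_j=a\mid\#1=j,h)$ denotes the probability of outcome $a$ when $j$ is measured first (so $\Pr(A_j=1\mid\#1=j,h)=p_j(h)$). *)

theory Defs
  imports "HOL-Probability.Probability"
begin

definition KCBS_D :: "(nat \<times> nat) set" where
  "KCBS_D = {(1,2),(3,2),(3,4),(5,4),(5,1)}"

text \<open>Pr(A_i = a | #1 = i, h) for a in {-1,1}, from p_i(h) = Pr(A_i = 1 | #1 = i, h).\<close>
definition pr_first :: "(nat \<Rightarrow> 'h \<Rightarrow> real) \<Rightarrow> nat \<Rightarrow> int \<Rightarrow> 'h \<Rightarrow> real" where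
  "pr_first p i a h = (if a = 1 then p i h else 1 - p i h)"

text \<open>Pr(A_j = a | #1 = i, #2 = j, h), from q_(i,j)(h) = Pr(A_j = 1 | #1 = i, #2 = j, h).\<close>
definition pr_second :: "(nat \<Rightarrow> nat \<Rightarrow> 'h \<Rightarrow> real) \<Rightarrow> nat \<Rightarrow> nat \<Rightarrow> int \<Rightarrow> 'h \<Rightarrow> real" where
  "pr_second q i j a h = (if a = 1 then q i j h else 1 - q i j h)"

end

theory Submission
  imports Defs
begin

text \<open>For each hidden variable the winning probability of a context (i, j) is the probability
  that two independent outcomes with Pr(+1) = p_i(h) and q_(i,j)(h) differ. Replacing q_(i,j)(h)
  by p_j(h) costs at most eps_(i,j)(h), and what remains is the probability that independent
  \<open>\<plusminus>1\<close>-colourings of the vertices of a pentagon disagree along an edge, summed over the five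
  edges. Since an odd cycle cannot be properly 2-coloured this sum is at most 4; averaging over
  h gives the bound.\<close>

definition prob_differ :: "real \<Rightarrow> real \<Rightarrow> real" where
  "prob_differ x y = x * (1 - y) + (1 - x) * y"

lemma directed_pair_le_1:
  fixes x y z :: real
  assumes "x \<le> 1" "0 \<le> y" "y \<le> 1" "0 \<le> z"
  shows "x * (1 - y) + y * (1 - z) \<le> 1"
proof -
  have "x * (1 - y) \<le> 1 - y" using mult_right_mono[of x 1 "1 - y"] assms by simp
  moreover have "y * (1 - z) \<le> y" using assms by (simp add: mult_left_le)
  ultimately show ?thesis by linarith
qed

lemma directed_pentagon_le_2:
  fixes a b c d e :: real
  assumes "a \<in> {0..1}" "b \<in> {0..1}" "c \<in> {0..1}" "d \<in> {0..1}" "e \<in> {0..1}"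
  shows "a * (1 - b) + b * (1 - c) + c * (1 - d) + d * (1 - e) + e * (1 - a) \<le> 2"
proof -
  define S where "S t = t * (1 - b) + b * (1 - c) + c * (1 - d) + d * (1 - e) + e * (1 - t)" for t
  \<comment> \<open>S is affine, so it suffices to check the endpoints t = 0 and t = 1.\<close>
  have "b * (1 - c) + c * (1 - d) \<le> 1" "d * (1 - e) + e * (1 - 0) \<le> 1"
    using assms directed_pair_le_1[of b c d] directed_pair_le_1[of d e 0] by simp_all
  then have S0: "S 0 \<le> 2" by (simp add: S_def)
  have "1 * (1 - b) + b * (1 - c) \<le> 1" "c * (1 - d) + d * (1 - e) \<le> 1"
    using assms directed_pair_le_1[of 1 b c] directed_pair_le_1[of c d e] by simp_all
  then have S1: "S 1 \<le> 2" by (simp add: S_def)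
  have "S a = a * S 1 + (1 - a) * S 0" by (simp add: S_def algebra_simps)
  also have "\<dots> \<le> 2" using assms S0 S1 by (intro convex_bound_le) auto
  finally show ?thesis by (simp add: S_def)
qed

lemma pentagon_prob_differ_le_4:
  fixes a b c d e :: real
  assumes "a \<in> {0..1}" "b \<in> {0..1}" "c \<in> {0..1}" "d \<in> {0..1}" "e \<in> {0..1}"
  shows "prob_differ a b + prob_differ b c + prob_differ c d + prob_differ d e + prob_differ e a \<le> 4"
proof -
  have "a * (1 - b) + b * (1 - c) + c * (1 - d) + d * (1 - e) + e * (1 - a) \<le> 2"
    "a * (1 - e) + e * (1 - d) + d * (1 - c) + c * (1 - b) + b * (1 - a) \<le> 2"
    using assms by (simp_all add: directed_pentagon_le_2)
  then show ?thesis by (simp add: prob_differ_def algebra_simps)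
qed

lemma prob_differ_perturb:
  fixes x y q \<delta> :: real
  assumes "0 \<le> x" "x \<le> 1" "\<bar>y - q\<bar> \<le> \<delta>"
  shows "prob_differ x q \<le> prob_differ x y + \<delta>"
proof -
  have "prob_differ x q - prob_differ x y = (q - y) * (1 - 2 * x)"
    by (simp add: prob_differ_def algebra_simps)
  also have "\<dots> \<le> \<bar>q - y\<bar> * \<bar>1 - 2 * x\<bar>" by (metis abs_ge_self abs_mult)
  also have "\<dots> \<le> \<bar>q - y\<bar>" using assms by (intro mult_left_le) auto
  finally show ?thesis using assms by linarith
qed

lemma sequential_win_le:
  assumes "0 \<le> p i h" "p i h \<le> 1" "\<bar>pr_first p j 1 h - pr_second q i j 1 h\<bar> \<le> \<delta>"
  shows "pr_first p i 1 h * pr_second q i j (-1) h + pr_first p i (-1) h * pr_second q i j 1 h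
    \<le> prob_differ (p i h) (p j h) + \<delta>"
  using prob_differ_perturb[of "p i h" "p j h" "q i j h" \<delta>] assms
  by (simp add: pr_first_def pr_second_def prob_differ_def)

lemma integral_le_const_plus_integral:
  fixes f g :: "'a \<Rightarrow> real"
  assumes "prob_space M" "integrable M g" "\<And>x. x \<in> space M \<Longrightarrow> f x \<le> c + g x"
    and "0 \<le> c + (\<integral>x. g x \<partial>M)"
  shows "(\<integral>x. f x \<partial>M) \<le> c + (\<integral>x. g x \<partial>M)"
proof (cases "integrable M f")
  case True
  interpret prob_space M by fact
  have "(\<integral>x. f x \<partial>M) \<le> (\<integral>x. c + g x \<partial>M)"
    using True assms by (intro integral_mono) auto
  also have "\<dots> = c + (\<integral>x. g x \<partial>M)"
    using assms by (simp add: prob_space)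
  finally show ?thesis .
qed (use assms in \<open>simp add: not_integrable_integral_eq\<close>)

theorem mainTheorem1:
  fixes M :: "'h measure"
    and p :: "nat \<Rightarrow> 'h \<Rightarrow> real"
    and q :: "nat \<Rightarrow> nat \<Rightarrow> 'h \<Rightarrow> real"
    and J :: "nat \<Rightarrow> nat \<Rightarrow> int \<Rightarrow> int \<Rightarrow> 'h \<Rightarrow> real"
    and eps :: "nat \<Rightarrow> nat \<Rightarrow> 'h \<Rightarrow> real"
    and \<epsilon> :: real
  assumes "prob_space M"
    and "\<epsilon> \<ge> 0"
    and p_range: "\<And>i h. i \<in> {1..5} \<Longrightarrow> h \<in> space M \<Longrightarrow> 0 \<le> p i h \<and> p i h \<le> 1"
    and q_range: "\<And>i j h. (i, j) \<in> KCBS_D \<Longrightarrow> h \<in> space M \<Longrightarrow> 0 \<le> q i j h \<and> q i j h \<le> 1"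
    and p_meas: "\<And>i. i \<in> {1..5} \<Longrightarrow> p i \<in> borel_measurable M"
    and q_meas: "\<And>i j. (i, j) \<in> KCBS_D \<Longrightarrow> q i j \<in> borel_measurable M"
    and sequentiality: "\<And>i j ai aj h. (i, j) \<in> KCBS_D \<Longrightarrow> ai \<in> {-1, 1} \<Longrightarrow> aj \<in> {-1, 1} \<Longrightarrow>
        h \<in> space M \<Longrightarrow> J i j ai aj h = pr_first p i ai h * pr_second q i j aj h"
    and eps_range: "\<And>i j h. (i, j) \<in> KCBS_D \<Longrightarrow> h \<in> space M \<Longrightarrow> 0 \<le> eps i j h \<and> eps i j h \<le> 1"
    and eps_meas: "\<And>i j. (i, j) \<in> KCBS_D \<Longrightarrow> eps i j \<in> borel_measurable M"
    and bounded_incompat: "\<And>i j a h. (i, j) \<in> KCBS_D \<Longrightarrow> a \<in> {-1, 1} \<Longrightarrow> h \<in> space M \<Longrightarrow>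
        \<bar>pr_first p j a h - pr_second q i j a h\<bar> \<le> eps i j h"
    and eps_avg: "(1/5) * (\<integral>h. (\<Sum>(i, j)\<in>KCBS_D. eps i j h) \<partial>M) \<le> \<epsilon>"
  shows "(1/5) * (\<integral>h. (\<Sum>(i, j)\<in>KCBS_D. \<Sum>a\<in>{-1, 1::int}. J i j a (-a) h) \<partial>M) \<le> 4/5 + \<epsilon>"
proof -
  interpret prob_space M by fact
  have D_vertices: "(i, j) \<in> KCBS_D \<Longrightarrow> i \<in> {1..5} \<and> j \<in> {1..5}" for i j
    by (auto simp: KCBS_D_def)
  have context_win: "(\<Sum>a\<in>{-1, 1::int}. J i j a (-a) h) \<le> prob_differ (p i h) (p j h) + eps i j h"
    if ij: "(i, j) \<in> KCBS_D" and h: "h \<in> space M" for i j h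
  proof -
    have "(\<Sum>a\<in>{-1, 1::int}. J i j a (-a) h)
        = pr_first p i 1 h * pr_second q i j (-1) h + pr_first p i (-1) h * pr_second q i j 1 h"
      using sequentiality[OF ij _ _ h, of 1 "-1"] sequentiality[OF ij _ _ h, of "-1" 1] by simp
    also have "\<dots> \<le> prob_differ (p i h) (p j h) + eps i j h"
      using p_range[OF _ h] D_vertices[OF ij] bounded_incompat[OF ij _ h, of 1]
      by (intro sequential_win_le) auto
    finally show ?thesis .
  qed
  have pointwise: "(\<Sum>(i, j)\<in>KCBS_D. \<Sum>a\<in>{-1, 1::int}. J i j a (-a) h)
      \<le> 4 + (\<Sum>(i, j)\<in>KCBS_D. eps i j h)" if h: "h \<in> space M" for h
  proof -
    have "(\<Sum>(i, j)\<in>KCBS_D. \<Sum>a\<in>{-1, 1::int}. J i j a (-a) h)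
        \<le> (\<Sum>(i, j)\<in>KCBS_D. prob_differ (p i h) (p j h)) + (\<Sum>(i, j)\<in>KCBS_D. eps i j h)"
      using context_win[OF _ h] by (simp add: sum.distrib[symmetric] case_prod_beta sum_mono)
    moreover have "(\<Sum>(i, j)\<in>KCBS_D. prob_differ (p i h) (p j h)) \<le> 4"
      using pentagon_prob_differ_le_4[of "p 1 h" "p 2 h" "p 3 h" "p 4 h" "p 5 h"] p_range[OF _ h]
      by (simp add: KCBS_D_def prob_differ_def algebra_simps)
    ultimately show ?thesis by linarith
  qed
  have eps_integrable: "integrable M (\<lambda>h. \<Sum>(i, j)\<in>KCBS_D. eps i j h)"
    unfolding case_prod_beta
  proof (rule Bochner_Integration.integrable_sum)
    fix ij assume "ij \<in> KCBS_D"
    then show "integrable M (eps (fst ij) (snd ij))"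
      using eps_meas eps_range by (intro integrable_const_bound[where B = 1]) auto
  qed
  have "0 \<le> (\<integral>h. (\<Sum>(i, j)\<in>KCBS_D. eps i j h) \<partial>M)"
    using eps_range by (intro integral_nonneg_AE AE_I2 sum_nonneg) auto
  then have "(\<integral>h. (\<Sum>(i, j)\<in>KCBS_D. \<Sum>a\<in>{-1, 1::int}. J i j a (-a) h) \<partial>M)
      \<le> 4 + (\<integral>h. (\<Sum>(i, j)\<in>KCBS_D. eps i j h) \<partial>M)"
    using eps_integrable pointwise by (intro integral_le_const_plus_integral) (auto intro: prob_space_axioms)
  then show ?thesis using eps_avg by linarith
qed

end
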